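(* Let $0\le b<d\le n$ be integers and fix a homological degree. (1) If $\hat z$ is a relative cycle of $\hat K(b,d]$ whose boundary $\partial\hat z$ contains $\sigma\times\{b\}$ with $\min\sigma=b$, then $[\hat z]\notin\operatorname{im}\big(H(\hat K(b-1,d])\to H(\hat K(b,d])\big)$. (2) If $\hat z$ is a relative cycle of $\hat K[b,d)$ whose boundary $\partial\hat z$ contains $\sigma\times\{d\}$ with $\max\sigma=d$, then $[\hat z]\notin\operatorname{im}\big(H(\hat K[b,d+1))\to H(\hat K[b,d))\big)$. (3) If $\hat z$ is a relative cycle of $\hat K(b,d)$ whose boundary $\partial\hat z$ contains $\sigma\times\{b\}$ with $\min\sigma=b$ and $\tau\times\{d\}$ with $\max\tau=d$, then $[\hat z]\notin\operatorname{im}\big(H(\hat K(b-1,d))\to H(\hat K(b,d))\big)$ and $[\hat z]\notin\operatorname{im}\big(H(\hat K(b,d+1))\to H(\hat K(b,d))\big)$.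
   Context: Fix a field $\mathbb F$; all chains and homology groups have coefficients in $\mathbb F$. Let $n\ge 1$ and let $K$ be a finite $\Delta$-complex (distinct simplices may have the same boundary) in which every simplex $\sigma$ carries an integer interval $T(\sigma)=[\min\sigma,\max\sigma]\subseteq[0,n]$ with $\min\sigma<\max\sigma$, such that for each integer $i$ the set $K_i=\{\sigma: i\in T(\sigma)\}$ is a subcomplex (these form a zigzag $K_0\to K_1\leftarrow K_2\to\cdots$), and such that whenever $\sigma$ is a proper face of $\tau$ we have $\min\sigma<\min\tau<\max\tau<\max\sigma$. The prism $\hat K$ is the cell complex whose cells are the vertical cells $\sigma\times\{i\}$ for $\sigma\in K$ and integers $i\in T(\sigma)$ (of dimension $\dim\sigma$) and the horizontal cells $\sigma\times[i,i+1]$ for integers $i$ with $[i,i+1]\subseteq T(\sigma)$ (of dimension $\dim\sigma+1$), with boundary $\partial(\sigma\times\{i\})=(\partial\sigma)\times\{i\}$ and $\partial(\sigma\times[i,i+1])=(\partial\sigma)\times[i,i+1]+(-1)^{\dim\sigma}(\sigma\times\{i+1\}-\sigma\times\{i\})$ (terms not in $\hat K$ do not occur). For integers $i\le j$, $\hat K_i^j$ is the subcomplex of cells $\sigma\times T$ with $T\subseteq[i,j]$; so $\hat K_{-1}^{n+1}=\hat K$. For integers $b\le d$ define the pairs $\hat K[b,d]=(\hat K_b^d,\emptyset)$, $\hat K(b,d]=(\hat K_{-1}^d,\hat K_{-1}^b)$, $\hat K[b,d)=(\hat K_b^{n+1},\hat K_d^{n+1})$, $\hat K(b,d)=(\hat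 K,\hat K_{-1}^b\cup\hat K_d^{n+1})$, and write $H(\cdot)$ for their relative homology; maps between these groups are induced by inclusions of pairs. A relative cycle of a pair $(X,A)$ is a chain in $X$ whose boundary lies in $A$. A chain "contains" a cell if the cell's coefficient is nonzero. *)

theory Defs
  imports Main
begin

definition delta_complex :: "'s set \<Rightarrow> ('s \<Rightarrow> nat) \<Rightarrow> ('s \<Rightarrow> nat \<Rightarrow> 's) \<Rightarrow> bool" where
  "delta_complex K dim face \<longleftrightarrow> finite K \<and>
     (\<forall>s\<in>K. \<forall>j. 0 < dim s \<and> j \<le> dim s \<longrightarrow> face s j \<in> K \<and> dim (face s j) = dim s - 1) \<and>
     (\<forall>s\<in>K. \<forall>i j. 1 < dim s \<and> i < j \<and> j \<le> dim s \<longrightarrow>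
        face (face s j) i = face (face s i) (j - 1))"

text \<open>The filtered (zigzag) complex: each simplex s carries T(s) = [mn s, mx s] within [0,n],
  mn s < mx s, each K_i is a subcomplex, and for every (immediate, hence every iterated)
  proper face r of t: mn r < mn t < mx t < mx r.\<close>

definition zz_complex :: "'s set \<Rightarrow> ('s \<Rightarrow> nat) \<Rightarrow> ('s \<Rightarrow> nat \<Rightarrow> 's) \<Rightarrow> ('s \<Rightarrow> int) \<Rightarrow> ('s \<Rightarrow> int) \<Rightarrow> int \<Rightarrow> bool" where
  "zz_complex K dim face mn mx n \<longleftrightarrow> 1 \<le> n \<and> delta_complex K dim face \<and>
     (\<forall>s\<in>K. 0 \<le> mn s \<and> mn s < mx s \<and> mx s \<le> n) \<and>
     (\<forall>s\<in>K. \<forall>j i. 0 < dim s \<and> j \<le> dim s \<and> mn s \<le> i \<and> i \<le> mx s \<longrightarrow>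
        mn (face s j) \<le> i \<and> i \<le> mx (face s j)) \<and>
     (\<forall>s\<in>K. \<forall>j. 0 < dim s \<and> j \<le> dim s \<longrightarrow>
        mn (face s j) < mn s \<and> mn s < mx s \<and> mx s < mx (face s j))"

text \<open>Cells of the prism: V s i = s x {i}, Hc s i = s x [i,i+1].\<close>
datatype 's cell = V 's int | Hc 's int

definition prism :: "'s set \<Rightarrow> ('s \<Rightarrow> int) \<Rightarrow> ('s \<Rightarrow> int) \<Rightarrow> 's cell set" where
  "prism K mn mx = {V s i |s i. s \<in> K \<and> mn s \<le> i \<and> i \<le> mx s}
                 \<union> {Hc s i |s i. s \<in> K \<and> mn s \<le> i \<and> i + 1 \<le> mx s}"

definition cdim :: "('s \<Rightarrow> nat) \<Rightarrow> 's cell \<Rightarrow> nat" where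
  "cdim dim c = (case c of V s i \<Rightarrow> dim s | Hc s i \<Rightarrow> dim s + 1)"

text \<open>Subcomplex hat K_i^j: cells s x T with T contained in [i,j].\<close>
definition sub_prism :: "'s set \<Rightarrow> ('s \<Rightarrow> int) \<Rightarrow> ('s \<Rightarrow> int) \<Rightarrow> int \<Rightarrow> int \<Rightarrow> 's cell set" where
  "sub_prism K mn mx i j = {c \<in> prism K mn mx.
     (case c of V s k \<Rightarrow> i \<le> k \<and> k \<le> j | Hc s k \<Rightarrow> i \<le> k \<and> k + 1 \<le> j)}"

definition simp_bd :: "('s \<Rightarrow> nat) \<Rightarrow> ('s \<Rightarrow> nat \<Rightarrow> 's) \<Rightarrow> ('s \<Rightarrow> int \<Rightarrow> 's cell) \<Rightarrow> 's \<Rightarrow> int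
    \<Rightarrow> 's cell \<Rightarrow> 'f::field" where
  "simp_bd dim face C s i = (\<lambda>x. if dim s = 0 then 0 else
      (\<Sum>j\<in>{0..dim s}. if C (face s j) i = x then (-1) ^ j else 0))"

definition cell_bd :: "('s \<Rightarrow> nat) \<Rightarrow> ('s \<Rightarrow> nat \<Rightarrow> 's) \<Rightarrow> 's cell \<Rightarrow> 's cell \<Rightarrow> 'f::field" where
  "cell_bd dim face c = (case c of
      V s i \<Rightarrow> simp_bd dim face V s i
    | Hc s i \<Rightarrow> (\<lambda>x. simp_bd dim face Hc s i x + (-1) ^ dim s *
          ((if x = V s (i + 1) then 1 else 0) - (if x = V s i then 1 else 0))))"

definition chain_bd :: "'s set \<Rightarrow> ('s \<Rightarrow> nat) \<Rightarrow> ('s \<Rightarrow> nat \<Rightarrow> 's) \<Rightarrow> ('s \<Rightarrow> int) \<Rightarrow> ('s \<Rightarrow> int)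
    \<Rightarrow> ('s cell \<Rightarrow> 'f::field) \<Rightarrow> 's cell \<Rightarrow> 'f" where
  "chain_bd K dim face mn mx z = (\<lambda>x. \<Sum>c\<in>prism K mn mx. z c * cell_bd dim face c x)"

definition is_chain :: "('s \<Rightarrow> nat) \<Rightarrow> 's cell set \<Rightarrow> nat \<Rightarrow> ('s cell \<Rightarrow> 'f::field) \<Rightarrow> bool" where
  "is_chain dim S p z \<longleftrightarrow> (\<forall>c. z c \<noteq> 0 \<longrightarrow> c \<in> S \<and> cdim dim c = p)"

definition rel_cycle :: "'s set \<Rightarrow> ('s \<Rightarrow> nat) \<Rightarrow> ('s \<Rightarrow> nat \<Rightarrow> 's) \<Rightarrow> ('s \<Rightarrow> int) \<Rightarrow> ('s \<Rightarrow> int)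
    \<Rightarrow> 's cell set \<Rightarrow> 's cell set \<Rightarrow> nat \<Rightarrow> ('s cell \<Rightarrow> 'f::field) \<Rightarrow> bool" where
  "rel_cycle K dim face mn mx X A p z \<longleftrightarrow> is_chain dim X p z \<and>
     (\<forall>c. chain_bd K dim face mn mx z c \<noteq> 0 \<longrightarrow> c \<in> A)"

definition homologous :: "'s set \<Rightarrow> ('s \<Rightarrow> nat) \<Rightarrow> ('s \<Rightarrow> nat \<Rightarrow> 's) \<Rightarrow> ('s \<Rightarrow> int) \<Rightarrow> ('s \<Rightarrow> int)
    \<Rightarrow> 's cell set \<Rightarrow> 's cell set \<Rightarrow> nat \<Rightarrow> ('s cell \<Rightarrow> 'f::field) \<Rightarrow> ('s cell \<Rightarrow> 'f) \<Rightarrow> bool" where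
  "homologous K dim face mn mx X A p z z' \<longleftrightarrow>
     (\<exists>a w. is_chain dim A p a \<and> is_chain dim X (p + 1) w \<and>
        (\<forall>c. z c - z' c = a c + chain_bd K dim face mn mx w c))"

text \<open>The class [z] in H_p(X,A) lies in the image of the map H_p(X',A') -> H_p(X,A)
  induced by the inclusion of pairs (X',A') into (X,A).\<close>
definition in_image :: "'s set \<Rightarrow> ('s \<Rightarrow> nat) \<Rightarrow> ('s \<Rightarrow> nat \<Rightarrow> 's) \<Rightarrow> ('s \<Rightarrow> int) \<Rightarrow> ('s \<Rightarrow> int)
    \<Rightarrow> 's cell set \<Rightarrow> 's cell set \<Rightarrow> 's cell set \<Rightarrow> 's cell set \<Rightarrow> nat \<Rightarrow> ('s cell \<Rightarrow> 'f::field) \<Rightarrow> bool" where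
  "in_image K dim face mn mx X' A' X A p z \<longleftrightarrow>
     (\<exists>z'. rel_cycle K dim face mn mx X' A' p z' \<and> homologous K dim face mn mx X A p z z')"

end

theory Submission imports Defs begin

text \<open>If \<open>\<sigma>\<close> is born at \<open>b = min \<sigma>\<close>, the only cell of the prism whose boundary meets
  \<open>\<sigma> \<times> {b}\<close> is \<open>\<sigma> \<times> [b, b+1]\<close>, and that cell lies in the boundary of no cell at all, since
  faces are born strictly earlier. Hence the coefficient of \<open>\<sigma> \<times> {b}\<close> in \<open>\<partial>z\<close> is, up to
  sign, the coefficient of \<open>\<sigma> \<times> [b, b+1]\<close> in \<open>z\<close>, and the latter is unchanged by adding
  boundaries and by adding chains of the subspace \<open>A\<close>, which does not contain
  \<open>\<sigma> \<times> [b, b+1]\<close>. A cycle relative to a pair whose subspace misses \<open>\<sigma> \<times> {b}\<close> has this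
  coefficient zero, so \<open>z\<close> cannot be homologous to one. Deaths are symmetric.\<close>

lemma zz_face_lifespan:
  assumes "zz_complex K dim face mn mx n" "t \<in> K" "0 < dim t" "j \<le> dim t"
  shows "mn (face t j) < mn t" "mx t < mx (face t j)"
  using assms unfolding zz_complex_def by auto

lemma finite_prism:
  assumes zz: "zz_complex K dim face mn mx n"
  shows "finite (prism K mn mx)"
proof -
  have "finite K" and bounds: "\<forall>s\<in>K. 0 \<le> mn s \<and> mx s \<le> n"
    using zz unfolding zz_complex_def delta_complex_def by auto
  have "prism K mn mx \<subseteq> (\<lambda>(s, i). V s i) ` (K \<times> {0..n}) \<union> (\<lambda>(s, i). Hc s i) ` (K \<times> {0..n})"
    unfolding prism_def using bounds by fastforce
  then show ?thesis
    by (rule finite_subset) (use \<open>finite K\<close> in auto)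
qed

lemma Hc_birth_in_prism:
  assumes "zz_complex K dim face mn mx n" "s \<in> K"
  shows "Hc s (mn s) \<in> prism K mn mx"
  using assms unfolding zz_complex_def prism_def by auto

lemma Hc_death_in_prism:
  assumes "zz_complex K dim face mn mx n" "s \<in> K"
  shows "Hc s (mx s - 1) \<in> prism K mn mx"
  using assms unfolding zz_complex_def prism_def by force

lemma simp_bd_eq_0:
  assumes "\<And>j. 0 < dim t \<Longrightarrow> j \<le> dim t \<Longrightarrow> C (face t j) i \<noteq> x"
  shows "simp_bd dim face C t i x = 0"
  unfolding simp_bd_def using assms by (auto intro!: sum.neutral)

lemma cell_bd_V_birth:
  assumes zz: "zz_complex K dim face mn mx n" and "s \<in> K" "c \<in> prism K mn mx"
  shows "(cell_bd dim face c (V s (mn s)) :: 'f::field) =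
    (if c = Hc s (mn s) then - ((-1) ^ dim s) else 0)"
proof (cases c)
  case (V t i)
  with assms have "t \<in> K" "mn t \<le> i" unfolding prism_def by auto
  then have "simp_bd dim face V t i (V s (mn s)) = (0::'f)"
    using zz_face_lifespan[OF zz] by (force intro: simp_bd_eq_0)
  with V show ?thesis unfolding cell_bd_def by simp
next
  case (Hc t i)
  with assms show ?thesis unfolding cell_bd_def simp_bd_def prism_def by auto
qed

lemma cell_bd_Hc_birth:
  assumes zz: "zz_complex K dim face mn mx n" and "c \<in> prism K mn mx"
  shows "(cell_bd dim face c (Hc s (mn s)) :: 'f::field) = 0"
proof (cases c)
  case (V t i)
  then show ?thesis unfolding cell_bd_def simp_bd_def by simp
next
  case (Hc t i)
  with assms have "t \<in> K" "mn t \<le> i" unfolding prism_def by auto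
  then have "simp_bd dim face Hc t i (Hc s (mn s)) = (0::'f)"
    using zz_face_lifespan[OF zz] by (force intro: simp_bd_eq_0)
  with Hc show ?thesis unfolding cell_bd_def by simp
qed

lemma cell_bd_V_death:
  assumes zz: "zz_complex K dim face mn mx n" and "s \<in> K" "c \<in> prism K mn mx"
  shows "(cell_bd dim face c (V s (mx s)) :: 'f::field) =
    (if c = Hc s (mx s - 1) then (-1) ^ dim s else 0)"
proof (cases c)
  case (V t i)
  with assms have "t \<in> K" "i \<le> mx t" unfolding prism_def by auto
  then have "simp_bd dim face V t i (V s (mx s)) = (0::'f)"
    using zz_face_lifespan[OF zz] by (force intro: simp_bd_eq_0)
  with V show ?thesis unfolding cell_bd_def by simp
next
  case (Hc t i)
  with assms show ?thesis unfolding cell_bd_def simp_bd_def prism_def by auto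
qed

lemma cell_bd_Hc_death:
  assumes zz: "zz_complex K dim face mn mx n" and "c \<in> prism K mn mx"
  shows "(cell_bd dim face c (Hc s (mx s - 1)) :: 'f::field) = 0"
proof (cases c)
  case (V t i)
  then show ?thesis unfolding cell_bd_def simp_bd_def by simp
next
  case (Hc t i)
  with assms have "t \<in> K" "i + 1 \<le> mx t" unfolding prism_def by auto
  then have "simp_bd dim face Hc t i (Hc s (mx s - 1)) = (0::'f)"
    using zz_face_lifespan[OF zz] by (force intro: simp_bd_eq_0)
  with Hc show ?thesis unfolding cell_bd_def by simp
qed

lemma chain_bd_V_birth:
  assumes zz: "zz_complex K dim face mn mx n" and s: "s \<in> K"
  shows "chain_bd K dim face mn mx (y :: _ \<Rightarrow> 'f::field) (V s (mn s)) =
    - ((-1) ^ dim s) * y (Hc s (mn s))"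
proof -
  have "chain_bd K dim face mn mx y (V s (mn s)) =
      (\<Sum>c\<in>prism K mn mx. if c = Hc s (mn s) then y c * - ((-1) ^ dim s) else 0)"
    unfolding chain_bd_def by (rule sum.cong) (auto simp: cell_bd_V_birth[OF zz s])
  then show ?thesis
    using finite_prism[OF zz] Hc_birth_in_prism[OF zz s] by simp
qed

lemma chain_bd_Hc_birth:
  assumes "zz_complex K dim face mn mx n"
  shows "chain_bd K dim face mn mx (y :: _ \<Rightarrow> 'f::field) (Hc s (mn s)) = 0"
  unfolding chain_bd_def by (rule sum.neutral) (simp add: cell_bd_Hc_birth[OF assms])

lemma chain_bd_V_death:
  assumes zz: "zz_complex K dim face mn mx n" and s: "s \<in> K"
  shows "chain_bd K dim face mn mx (y :: _ \<Rightarrow> 'f::field) (V s (mx s)) =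
    (-1) ^ dim s * y (Hc s (mx s - 1))"
proof -
  have "chain_bd K dim face mn mx y (V s (mx s)) =
      (\<Sum>c\<in>prism K mn mx. if c = Hc s (mx s - 1) then y c * (-1) ^ dim s else 0)"
    unfolding chain_bd_def by (rule sum.cong) (auto simp: cell_bd_V_death[OF zz s])
  then show ?thesis
    using finite_prism[OF zz] Hc_death_in_prism[OF zz s] by simp
qed

lemma chain_bd_Hc_death:
  assumes "zz_complex K dim face mn mx n"
  shows "chain_bd K dim face mn mx (y :: _ \<Rightarrow> 'f::field) (Hc s (mx s - 1)) = 0"
  unfolding chain_bd_def by (rule sum.neutral) (simp add: cell_bd_Hc_death[OF assms])

lemma not_in_image_free_face:
  fixes z :: "'s cell \<Rightarrow> 'f::field"
  assumes free: "\<And>y :: 's cell \<Rightarrow> 'f. chain_bd K dim face mn mx y v = u * y e"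
    and maximal: "\<And>y :: 's cell \<Rightarrow> 'f. chain_bd K dim face mn mx y e = 0"
    and "chain_bd K dim face mn mx z v \<noteq> 0" and "v \<notin> A'" and "e \<notin> A"
  shows "\<not> in_image K dim face mn mx X' A' X A p z"
proof
  assume "in_image K dim face mn mx X' A' X A p z"
  then obtain z' a w where cycle': "rel_cycle K dim face mn mx X' A' p z'"
    and a: "is_chain dim A p a" and hom: "z e - z' e = a e + chain_bd K dim face mn mx w e"
    unfolding in_image_def homologous_def by blast
  have "u \<noteq> 0" "z e \<noteq> 0" using assms(3) by (auto simp: free)
  moreover have "u * z' e = 0"
    using cycle' \<open>v \<notin> A'\<close> unfolding rel_cycle_def free[symmetric] by blast
  moreover have "a e = 0" using a \<open>e \<notin> A\<close> unfolding is_chain_def by blast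
  ultimately show False using hom by (simp add: maximal)
qed

lemma not_in_image_birth:
  assumes zz: "zz_complex K dim face mn mx n" and "s \<in> K" "mn s = b"
    and "chain_bd K dim face mn mx (z :: _ \<Rightarrow> 'f::field) (V s b) \<noteq> 0"
    and "V s b \<notin> A'" "Hc s b \<notin> A"
  shows "\<not> in_image K dim face mn mx X' A' X A p z"
  using assms(4-6) unfolding \<open>mn s = b\<close>[symmetric]
  by (rule not_in_image_free_face[OF chain_bd_V_birth[OF zz \<open>s \<in> K\<close>] chain_bd_Hc_birth[OF zz]])

lemma not_in_image_death:
  assumes zz: "zz_complex K dim face mn mx n" and "s \<in> K" "mx s = d"
    and "chain_bd K dim face mn mx (z :: _ \<Rightarrow> 'f::field) (V s d) \<noteq> 0"
    and "V s d \<notin> A'" "Hc s (d - 1) \<notin> A"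
  shows "\<not> in_image K dim face mn mx X' A' X A p z"
  using assms(4-6) unfolding \<open>mx s = d\<close>[symmetric]
  by (rule not_in_image_free_face[OF chain_bd_V_death[OF zz \<open>s \<in> K\<close>] chain_bd_Hc_death[OF zz]])

theorem lemma5p2:
  fixes K :: "'s set" and dim :: "'s \<Rightarrow> nat" and face :: "'s \<Rightarrow> nat \<Rightarrow> 's"
    and mn mx :: "'s \<Rightarrow> int" and n b d :: int and p :: nat
  assumes "zz_complex K dim face mn mx n"
    and "0 \<le> b" and "b < d" and "d \<le> n"
  shows
   "(\<forall>(z :: 's cell \<Rightarrow> 'f::field) s.
      rel_cycle K dim face mn mx (sub_prism K mn mx (-1) d) (sub_prism K mn mx (-1) b) p z \<and>
      s \<in> K \<and> mn s = b \<and> chain_bd K dim face mn mx z (V s b) \<noteq> 0 \<longrightarrow>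
      \<not> in_image K dim face mn mx
          (sub_prism K mn mx (-1) d) (sub_prism K mn mx (-1) (b - 1))
          (sub_prism K mn mx (-1) d) (sub_prism K mn mx (-1) b) p z)
  \<and> (\<forall>(z :: 's cell \<Rightarrow> 'f::field) s.
      rel_cycle K dim face mn mx (sub_prism K mn mx b (n + 1)) (sub_prism K mn mx d (n + 1)) p z \<and>
      s \<in> K \<and> mx s = d \<and> chain_bd K dim face mn mx z (V s d) \<noteq> 0 \<longrightarrow>
      \<not> in_image K dim face mn mx
          (sub_prism K mn mx b (n + 1)) (sub_prism K mn mx (d + 1) (n + 1))
          (sub_prism K mn mx b (n + 1)) (sub_prism K mn mx d (n + 1)) p z)
  \<and> (\<forall>(z :: 's cell \<Rightarrow> 'f::field) s t.
      rel_cycle K dim face mn mx (prism K mn mx)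
        (sub_prism K mn mx (-1) b \<union> sub_prism K mn mx d (n + 1)) p z \<and>
      s \<in> K \<and> mn s = b \<and> chain_bd K dim face mn mx z (V s b) \<noteq> 0 \<and>
      t \<in> K \<and> mx t = d \<and> chain_bd K dim face mn mx z (V t d) \<noteq> 0 \<longrightarrow>
      \<not> in_image K dim face mn mx
          (prism K mn mx) (sub_prism K mn mx (-1) (b - 1) \<union> sub_prism K mn mx d (n + 1))
          (prism K mn mx) (sub_prism K mn mx (-1) b \<union> sub_prism K mn mx d (n + 1)) p z
    \<and> \<not> in_image K dim face mn mx
          (prism K mn mx) (sub_prism K mn mx (-1) b \<union> sub_prism K mn mx (d + 1) (n + 1))
          (prism K mn mx) (sub_prism K mn mx (-1) b \<union> sub_prism K mn mx d (n + 1)) p z)"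
proof (intro conjI allI impI; elim conjE)
  fix z :: "'s cell \<Rightarrow> 'f" and s
  assume "s \<in> K" "mn s = b" "chain_bd K dim face mn mx z (V s b) \<noteq> 0"
  then show "\<not> in_image K dim face mn mx
      (sub_prism K mn mx (-1) d) (sub_prism K mn mx (-1) (b - 1))
      (sub_prism K mn mx (-1) d) (sub_prism K mn mx (-1) b) p z"
    by (rule not_in_image_birth[OF assms(1)]) (auto simp: sub_prism_def)
next
  fix z :: "'s cell \<Rightarrow> 'f" and s
  assume "s \<in> K" "mx s = d" "chain_bd K dim face mn mx z (V s d) \<noteq> 0"
  then show "\<not> in_image K dim face mn mx
      (sub_prism K mn mx b (n + 1)) (sub_prism K mn mx (d + 1) (n + 1))
      (sub_prism K mn mx b (n + 1)) (sub_prism K mn mx d (n + 1)) p z"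
    by (rule not_in_image_death[OF assms(1)]) (auto simp: sub_prism_def)
next
  fix z :: "'s cell \<Rightarrow> 'f" and s t
  assume birth: "s \<in> K" "mn s = b" "chain_bd K dim face mn mx z (V s b) \<noteq> 0"
    and death: "t \<in> K" "mx t = d" "chain_bd K dim face mn mx z (V t d) \<noteq> 0"
  from birth show "\<not> in_image K dim face mn mx
      (prism K mn mx) (sub_prism K mn mx (-1) (b - 1) \<union> sub_prism K mn mx d (n + 1))
      (prism K mn mx) (sub_prism K mn mx (-1) b \<union> sub_prism K mn mx d (n + 1)) p z"
    by (rule not_in_image_birth[OF assms(1)]) (use \<open>b < d\<close> in \<open>auto simp: sub_prism_def\<close>)
  from death show "\<not> in_image K dim face mn mx
      (prism K mn mx) (sub_prism K mn mx (-1) b \<union> sub_prism K mn mx (d + 1) (n + 1))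
      (prism K mn mx) (sub_prism K mn mx (-1) b \<union> sub_prism K mn mx d (n + 1)) p z"
    by (rule not_in_image_death[OF assms(1)]) (use \<open>b < d\<close> in \<open>auto simp: sub_prism_def\<close>)
qed

end
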